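(* Let $\varphi(x)=\sum_{i\ge0}\gamma_ix^i\in\mathbb{K}[[x]]$ and let $r$ be an odd negative integer. Assume $\gamma_i=0$ for each $i\le -r$. Then $\varphi\in\mathcal{F}_r$ if and only if $$\sum_{i=0}^m(-1)^i\binom{m}{i}\frac{m+i}{m}\gamma_{m-r+i}=0\quad\text{for each } m\ge1.$$
   Context: $\mathbb{K}\in\{\mathbb{Q},\mathbb{R},\mathbb{C}\}$. For $r\in\mathbb{Z}$, $\mathcal{F}_r$ denotes the space of $\varphi\in\mathbb{K}[[x]]$ with $\varphi(x/(x-1))=(1-x)^r\varphi(x)$. *)

theory Defs
  imports "HOL-Computational_Algebra.Formal_Power_Series"
begin

text \<open>Integer powers of a formal power series: for negative exponents use the
  formal inverse (well defined here since it is applied to 1 - X, which is a unit).\<close>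
definition fps_int_power :: "'a::field fps \<Rightarrow> int \<Rightarrow> 'a fps" where
  "fps_int_power f r = (if 0 \<le> r then f ^ nat r else inverse (f ^ nat (- r)))"

definition F_space :: "int \<Rightarrow> 'a::field fps set" where
  "F_space r = {\<phi>. fps_compose \<phi> (fps_X * inverse (fps_X - 1))
                   = fps_int_power (1 - fps_X) r * \<phi>}"

end

theory Submission
  imports Defs
begin

text \<open>Put \<open>s = -r\<close> and \<open>\<sigma> = x/(x-1)\<close>, an involution under composition. Then
  \<open>\<phi> \<in> F_r\<close> says that \<open>\<phi>\<close> is fixed by the involution \<open>T \<phi> = (1-x)^s (\<phi> \<circ> \<sigma>)\<close>.
  The functionals \<open>L_m \<phi> = \<Sum>_i (-1)^i C(m,i) (m+i)/m \<gamma>_{m+s+i}\<close> satisfy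
  \<open>L_m (T \<phi>) = - L_m \<phi>\<close> when \<open>s\<close> is odd and \<open>\<gamma>_i = 0\<close> for \<open>i \<le> s\<close>: since
  \<open>(1-x)^s \<sigma>^n = (-1)^n x^n (1-x)^{-(n-s)}\<close>, this reduces to the binomial identity
  \<open>\<Sum>_i (-1)^i C(m,i) C(m+i,q) = (-1)^m C(m,q-m)\<close>, read off from \<open>y^m (1-y)^m\<close> at \<open>y = 1+x\<close>.
  So fixed points are annihilated by every \<open>L_m\<close>. Conversely, if all \<open>L_m \<phi>\<close> vanish, then
  \<open>\<psi> = \<phi> - T \<phi>\<close> satisfies \<open>T \<psi> = -\<psi>\<close> and \<open>L_m \<psi> = 0\<close>. As \<open>T\<close> multiplies the
  leading coefficient \<open>\<psi>_k\<close> by \<open>(-1)^k\<close>, it vanishes for even \<open>k\<close>; for odd \<open>k = 2m+s\<close> it is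
  a nonzero multiple of \<open>L_m \<psi>\<close>. Hence \<open>\<psi> = 0\<close>.\<close>

unbundle fps_syntax

lemma power_mult_one_minus_power:
  "(y::'a::comm_ring_1)^m * (1 - y)^m = (\<Sum>i=0..m. (-1)^i * of_nat (m choose i) * y^(m+i))"
proof -
  have "(1 - y)^m = (\<Sum>i=0..m. of_nat (m choose i) * (-y)^i)"
    using binomial_ring[of "-y" 1 m] by (simp add: atLeast0AtMost)
  then show ?thesis
    by (simp add: sum_distrib_left power_add power_minus[of y] algebra_simps)
qed

lemma fps_one_plus_X_power_nth:
  "((1 + fps_X :: 'a::field_char_0 fps) ^ n) $ k = of_nat (n choose k)"
  by (simp add: fps_binomial_of_nat[symmetric] binomial_gbinomial)

lemma fps_neg_one_power_mult_nth:
  "((-1 :: 'a::comm_ring_1 fps)^k * f) $ n = (-1)^k * f $ n"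
  by (induction k) simp_all

lemma sum_alternating_choose_choose:
  "(\<Sum>i=0..m. (-1)^i * of_nat (m choose i) * of_nat ((m+i) choose q) :: 'a::field_char_0)
     = (if m \<le> q then (-1)^m * of_nat (m choose (q - m)) else 0)"
proof -
  define Y where "Y = (1 + fps_X :: 'a fps)"
  have "(\<Sum>i=0..m. (-1)^i * of_nat (m choose i) * of_nat ((m+i) choose q)) = (Y^m * (1 - Y)^m) $ q"
    unfolding power_mult_one_minus_power fps_sum_nth
    by (simp add: Y_def fps_one_plus_X_power_nth fps_neg_one_power_mult_nth mult.assoc flip: fps_of_nat)
  also have "Y^m * (1 - Y)^m = (-1)^m * (fps_X^m * Y^m)"
    by (simp add: Y_def power_minus[of fps_X] mult_ac)
  finally show ?thesis
    by (simp add: fps_neg_one_power_mult_nth fps_X_power_mult_nth Y_def fps_one_plus_X_power_nth)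
qed

definition binom_weight :: "nat \<Rightarrow> nat \<Rightarrow> 'a::field_char_0" where
  "binom_weight m i = (-1)^i * of_nat (m choose i) * (of_nat (m + i) / of_nat m)"

lemma sum_binom_weight_choose:
  assumes "m \<ge> 1" and "q \<ge> 1"
  shows "(\<Sum>i=0..m. binom_weight m i * of_nat ((m+i-1) choose (q-1)) :: 'a::field_char_0)
           = (-1)^q * (if m \<le> q then binom_weight m (q - m) else 0)"
proof -
  have "(binom_weight m i :: 'a) * of_nat ((m+i-1) choose (q-1))
      = of_nat q / of_nat m * ((-1)^i * of_nat (m choose i) * of_nat ((m+i) choose q))" for i
  proof -
    have "(m+i) * ((m+i-1) choose (q-1)) = q * ((m+i) choose q)"
      using Suc_times_binomial_eq[of "m+i-1" "q-1"] assms by simp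
    then have absorb: "(of_nat (m+i) * of_nat ((m+i-1) choose (q-1)) :: 'a) = of_nat q * of_nat ((m+i) choose q)"
      by (metis of_nat_mult)
    have "(binom_weight m i :: 'a) * of_nat ((m+i-1) choose (q-1))
        = (-1)^i * of_nat (m choose i) * (of_nat (m+i) * of_nat ((m+i-1) choose (q-1))) / of_nat m"
      unfolding binom_weight_def by simp
    then show ?thesis
      unfolding absorb by simp
  qed
  then have "(\<Sum>i=0..m. binom_weight m i * of_nat ((m+i-1) choose (q-1)) :: 'a)
      = of_nat q / of_nat m * (\<Sum>i=0..m. (-1)^i * of_nat (m choose i) * of_nat ((m+i) choose q))"
    by (simp add: sum_distrib_left)
  also have "\<dots> = (-1)^q * (if m \<le> q then binom_weight m (q - m) else 0)"
  proof (cases "m \<le> q")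
    case True
    then obtain d where q: "q = m + d" by (metis le_add_diff_inverse)
    show ?thesis
      unfolding q sum_alternating_choose_choose binom_weight_def
      by (simp add: power_add mult_ac)
  qed (simp add: sum_alternating_choose_choose)
  finally show ?thesis .
qed

lemma fps_inverse_one_minus_X_power_nth:
  "inverse ((1 - fps_X :: 'a::field_char_0 fps)^q) $ j = of_nat ((q+j-1) choose j)"
proof (cases "q = 0")
  case False
  then show ?thesis
    using one_minus_const_fps_X_neg_power'[of q "1::'a"] by simp
qed (cases j; simp)

definition fps_sigma :: "'a::field fps" where
  "fps_sigma = fps_X * inverse (fps_X - 1)"

lemma fps_sigma_nth_0 [simp]: "fps_sigma $ 0 = 0"
  by (simp add: fps_sigma_def)

lemma fps_sigma_eq: "fps_sigma = - (fps_X * inverse (1 - fps_X :: 'a::field fps))"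
proof -
  have "fps_X - 1 = - (1 - fps_X :: 'a fps)" by simp
  then have "inverse (fps_X - 1) = - inverse (1 - fps_X :: 'a fps)"
    by (metis fps_inverse_minus)
  then show ?thesis by (simp add: fps_sigma_def)
qed

lemma fps_sigma_power:
  "fps_sigma^n = (-1)^n * (fps_X^n * inverse ((1 - fps_X :: 'a::field fps)^n))"
  by (simp add: fps_sigma_eq power_minus[of "fps_X * _"] power_mult_distrib fps_inverse_power)

lemma one_minus_X_power_mult_sigma_power_nth:
  assumes "s \<le> n"
  shows "((1 - fps_X)^s * fps_sigma^n :: 'a::field_char_0 fps) $ k
           = (-1)^n * (if n \<le> k then of_nat ((k-s-1) choose (k-n)) else 0)"
proof -
  have "(1 - fps_X :: 'a fps)^s * inverse ((1 - fps_X)^n) = inverse ((1 - fps_X)^(n-s))"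
  proof -
    have "(1 - fps_X :: 'a fps)^n = (1 - fps_X)^s * (1 - fps_X)^(n-s)"
      using assms by (simp flip: power_add)
    then show ?thesis
      by (simp add: fps_inverse_mult mult.assoc[symmetric] inverse_mult_eq_1' fps_nth_power_0)
  qed
  then have "(1 - fps_X)^s * fps_sigma^n = (-1)^n * (fps_X^n * inverse ((1 - fps_X :: 'a fps)^(n-s)))"
    unfolding fps_sigma_power by (metis mult.left_commute)
  moreover have "n - s + (k - n) - 1 = k - s - 1" if "n \<le> k"
    using that assms by simp
  ultimately show ?thesis
    by (simp add: fps_neg_one_power_mult_nth fps_X_power_mult_nth fps_inverse_one_minus_X_power_nth)
qed

lemma one_minus_X_power_mult_sigma_power_nth_self:
  "((1 - fps_X)^s * fps_sigma^k :: 'a::field fps) $ k = (-1)^k"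
  by (simp add: fps_sigma_power mult.left_commute[of "(1 - fps_X)^s"] fps_neg_one_power_mult_nth
                fps_X_power_mult_nth fps_nth_power_0)

lemma one_minus_fps_sigma: "1 - fps_sigma = inverse (1 - fps_X :: 'a::field fps)"
proof -
  have "(1 - fps_X) * inverse (1 - fps_X :: 'a fps) = 1"
    by (rule inverse_mult_eq_1') simp
  then show ?thesis
    by (simp add: fps_sigma_eq algebra_simps)
qed

lemma fps_X_compose_sigma [simp]: "fps_X oo fps_sigma = fps_sigma"
  by (simp add: fps_ext fps_X_fps_compose)

lemma fps_sigma_compose_sigma: "fps_sigma oo fps_sigma = (fps_X :: 'a::field fps)"
proof -
  have "inverse (fps_X - 1) oo fps_sigma = inverse (fps_sigma - 1 :: 'a fps)"
    by (simp add: fps_inverse_compose fps_compose_sub_distrib)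
  also have "fps_sigma - 1 = - inverse (1 - fps_X :: 'a fps)"
    using one_minus_fps_sigma[where 'a='a] by (simp add: algebra_simps)
  finally have "inverse (fps_X - 1) oo fps_sigma = (fps_X - 1 :: 'a fps)"
    by (simp add: fps_inverse_minus)
  moreover have "fps_sigma * (fps_X - 1) = (fps_X :: 'a fps)"
    by (simp add: fps_sigma_def mult.assoc inverse_mult_eq_1)
  ultimately show ?thesis
    by (simp add: fps_sigma_def fps_compose_mult_distrib)
qed

lemma one_minus_X_power_mult_compose_sigma:
  "(1 - fps_X :: 'a::field fps)^s * ((1 - fps_X)^s oo fps_sigma) = 1"
  by (simp add: fps_compose_power[symmetric] fps_compose_sub_distrib one_minus_fps_sigma
                inverse_mult_eq_1' flip: power_mult_distrib)

definition twist :: "nat \<Rightarrow> 'a::field fps \<Rightarrow> 'a fps" where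
  "twist s f = (1 - fps_X)^s * (f oo fps_sigma)"

lemma twist_nth:
  assumes "k \<le> M"
  shows "twist s f $ k = (\<Sum>n=0..M. f $ n * ((1 - fps_X)^s * fps_sigma^n) $ k)"
proof -
  have compose_nth: "(f oo fps_sigma) $ j = (\<Sum>n=0..M. f $ n * (fps_sigma^n) $ j)" if "j \<le> M" for j
    unfolding fps_compose_nth
  proof (rule sum.mono_neutral_left)
    show "\<forall>n\<in>{0..M} - {0..j}. f $ n * (fps_sigma^n) $ j = 0"
    proof
      fix n assume "n \<in> {0..M} - {0..j}"
      then show "f $ n * (fps_sigma^n) $ j = 0"
        using startsby_zero_power_prefix[OF fps_sigma_nth_0, of n] by (auto simp: not_le)
    qed
  qed (use that in auto)
  have "twist s f $ k = (\<Sum>i=0..k. \<Sum>n=0..M. f $ n * (((1 - fps_X)^s) $ i * (fps_sigma^n) $ (k - i)))"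
    using assms by (simp add: twist_def fps_mult_nth compose_nth sum_distrib_left mult.left_commute)
  also have "\<dots> = (\<Sum>n=0..M. f $ n * ((1 - fps_X)^s * fps_sigma^n) $ k)"
    by (subst sum.swap) (simp add: fps_mult_nth sum_distrib_left)
  finally show ?thesis .
qed

lemma twist_twist: "twist s (twist s f) = f"
proof -
  have "twist s (twist s f) = ((1 - fps_X)^s * ((1 - fps_X)^s oo fps_sigma)) * (f oo (fps_sigma oo fps_sigma))"
    by (simp add: twist_def fps_compose_mult_distrib fps_compose_assoc mult_ac)
  then show ?thesis
    by (simp add: one_minus_X_power_mult_compose_sigma fps_sigma_compose_sigma)
qed

lemma twist_diff: "twist s (f - g) = twist s f - twist s g"
  by (simp add: twist_def fps_compose_sub_distrib algebra_simps)

lemma F_space_iff_twist_fixed: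
  assumes "r < 0"
  shows "f \<in> F_space r \<longleftrightarrow> twist (nat (-r)) f = f"
proof -
  let ?U = "(1 - fps_X :: 'a::field fps)^nat (-r)"
  have U_inverse: "?U * inverse ?U = 1" "inverse ?U * ?U = 1"
    by (simp_all add: inverse_mult_eq_1' inverse_mult_eq_1 fps_nth_power_0)
  have "f oo fps_sigma = inverse ?U * f \<longleftrightarrow> ?U * (f oo fps_sigma) = f"
  proof
    assume "f oo fps_sigma = inverse ?U * f"
    then show "?U * (f oo fps_sigma) = f"
      by (simp add: U_inverse mult.assoc[symmetric])
  next
    assume fixed: "?U * (f oo fps_sigma) = f"
    have "f oo fps_sigma = inverse ?U * (?U * (f oo fps_sigma))"
      by (simp add: U_inverse mult.assoc[symmetric])
    then show "f oo fps_sigma = inverse ?U * f"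
      unfolding fixed .
  qed
  then show ?thesis
    using assms by (simp add: F_space_def fps_int_power_def twist_def flip: fps_sigma_def)
qed

definition weighted_coeffs :: "nat \<Rightarrow> nat \<Rightarrow> 'a::field_char_0 fps \<Rightarrow> 'a" where
  "weighted_coeffs s m g = (\<Sum>i=0..m. binom_weight m i * g $ (m+s+i))"

definition shifted_weight :: "nat \<Rightarrow> nat \<Rightarrow> nat \<Rightarrow> 'a::field_char_0" where
  "shifted_weight s m n = (if m+s \<le> n then binom_weight m (n-m-s) else 0)"

lemma weighted_coeffs_eq_sum_shifted_weight:
  "weighted_coeffs s m g = (\<Sum>n=0..2*m+s. g $ n * shifted_weight s m n)"
proof -
  have "(\<Sum>n=0..2*m+s. g $ n * shifted_weight s m n) = (\<Sum>n=0+(m+s)..m+(m+s). g $ n * shifted_weight s m n)"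
    by (rule sum.mono_neutral_right) (auto simp: shifted_weight_def)
  also have "\<dots> = weighted_coeffs s m g"
    unfolding sum.shift_bounds_cl_nat_ivl weighted_coeffs_def shifted_weight_def
    by (simp add: add_ac mult.commute)
  finally show ?thesis ..
qed

lemma weighted_coeffs_diff:
  "weighted_coeffs s m (f - g) = weighted_coeffs s m f - weighted_coeffs s m g"
  by (simp add: weighted_coeffs_def sum_subtractf right_diff_distrib)

lemma weighted_coeffs_leading:
  assumes "\<And>n. n < 2*m+s \<Longrightarrow> g $ n = 0"
  shows "weighted_coeffs s m g = binom_weight m m * g $ (2*m+s)"
proof -
  have "weighted_coeffs s m g = (\<Sum>i<m. binom_weight m i * g $ (m+s+i)) + binom_weight m m * g $ (m+s+m)"
    by (simp add: weighted_coeffs_def atLeast0AtMost flip: lessThan_Suc_atMost)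
  also have "(\<Sum>i<m. binom_weight m i * g $ (m+s+i)) = 0"
    by (simp add: assms)
  finally show ?thesis by (simp add: add_ac mult_2)
qed

lemma binom_weight_self_nonzero: "m \<ge> 1 \<Longrightarrow> binom_weight m m \<noteq> (0::'a::field_char_0)"
  by (simp add: binom_weight_def)

lemma one_minus_X_power_mult_sigma_power_nth_shift:
  assumes "s < n" and "m \<ge> 1"
  shows "((1 - fps_X)^s * fps_sigma^n :: 'a::field_char_0 fps) $ (m+s+i)
           = (-1)^n * of_nat ((m+i-1) choose (n-s-1))"
proof (cases "n \<le> m+s+i")
  case True
  then have "(m+i-1) choose (n-s-1) = (m+i-1) choose (m+s+i-n)"
    using assms by (subst binomial_symmetric) (auto simp: Suc_diff_le)
  with True assms show ?thesis
    by (simp add: one_minus_X_power_mult_sigma_power_nth)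
qed (use assms in \<open>simp add: one_minus_X_power_mult_sigma_power_nth binomial_eq_0\<close>)

lemma weighted_coeffs_one_minus_X_power_mult_sigma_power:
  assumes "odd s" and "s < n" and "m \<ge> 1"
  shows "weighted_coeffs s m ((1 - fps_X)^s * fps_sigma^n :: 'a::field_char_0 fps) = - shifted_weight s m n"
proof -
  have "weighted_coeffs s m ((1 - fps_X)^s * fps_sigma^n :: 'a fps)
      = (-1)^n * (\<Sum>i=0..m. binom_weight m i * of_nat ((m+i-1) choose ((n-s)-1)))"
    unfolding weighted_coeffs_def one_minus_X_power_mult_sigma_power_nth_shift[OF assms(2,3)]
    by (simp add: sum_distrib_left mult_ac)
  also have "\<dots> = (-1)^n * (-1)^(n-s) * (if m \<le> n-s then binom_weight m (n-s-m) else 0)"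
    using assms(2) by (subst sum_binom_weight_choose[OF assms(3)]) (simp_all add: mult.assoc)
  also have "(-1::'a)^n * (-1)^(n-s) = -1"
  proof -
    obtain d where "n = s + d" using \<open>s < n\<close> less_imp_add_positive by blast
    then show ?thesis using \<open>odd s\<close> by (simp add: power_add mult_ac)
  qed
  finally show ?thesis
    using assms by (auto simp: shifted_weight_def add.commute diff_diff_add)
qed

lemma weighted_coeffs_twist:
  assumes "odd s" and "m \<ge> 1" and "\<And>n. n \<le> s \<Longrightarrow> f $ n = 0"
  shows "weighted_coeffs s m (twist s f) = - weighted_coeffs s m (f :: 'a::field_char_0 fps)"
proof -
  let ?N = "2*m+s"
  have "weighted_coeffs s m (twist s f)
      = (\<Sum>n=0..?N. f $ n * weighted_coeffs s m ((1 - fps_X)^s * fps_sigma^n))"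
    unfolding weighted_coeffs_def
    by (simp add: twist_nth[of _ ?N] sum_distrib_left mult_ac sum.swap[of _ "{0..m}"])
  also have "\<dots> = (\<Sum>n=0..?N. f $ n * - shifted_weight s m n)"
  proof (rule sum.cong)
    fix n
    show "f $ n * weighted_coeffs s m ((1 - fps_X)^s * fps_sigma^n) = f $ n * - shifted_weight s m n"
      using assms(3)[of n]
      by (cases "n \<le> s")
         (simp_all add: weighted_coeffs_one_minus_X_power_mult_sigma_power[OF assms(1) _ assms(2)])
  qed simp
  also have "\<dots> = - weighted_coeffs s m f"
    by (simp add: weighted_coeffs_eq_sum_shifted_weight sum_negf)
  finally show ?thesis .
qed

lemma twist_nth_triangular:
  assumes "\<And>n. n < k \<Longrightarrow> f $ n = 0"
  shows "twist s f $ k = (-1)^k * f $ k"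
proof -
  have "twist s f $ k = (\<Sum>n<k. f $ n * ((1 - fps_X)^s * fps_sigma^n) $ k)
                          + f $ k * ((1 - fps_X)^s * fps_sigma^k) $ k"
    by (simp add: twist_nth[of k k] atLeast0AtMost flip: lessThan_Suc_atMost)
  then show ?thesis
    unfolding one_minus_X_power_mult_sigma_power_nth_self by (simp add: assms mult.commute)
qed

lemma twist_antifixed_eq_0:
  fixes \<psi> :: "'a::field_char_0 fps"
  assumes "odd s" and antifixed: "twist s \<psi> = - \<psi>"
    and low: "\<And>n. n \<le> s \<Longrightarrow> \<psi> $ n = 0"
    and weighted: "\<And>m. m \<ge> 1 \<Longrightarrow> weighted_coeffs s m \<psi> = 0"
  shows "\<psi> = 0"
proof (rule fps_ext)
  fix k show "\<psi> $ k = 0 $ k"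
  proof (induction k rule: less_induct)
    case (less k)
    then have lower: "\<And>n. n < k \<Longrightarrow> \<psi> $ n = 0" by simp
    consider "k \<le> s" | "s < k" "even k" | "s < k" "odd k" by linarith
    then show ?case
    proof cases
      case 2
      have "- \<psi> $ k = \<psi> $ k"
        using twist_nth_triangular[OF lower, of k s] \<open>even k\<close> by (simp add: antifixed)
      then show ?thesis by simp
    next
      case 3
      then have "even (k - s)"
        using \<open>odd s\<close> by (simp add: even_diff_nat)
      then obtain m where "k - s = 2*m" by (elim evenE)
      with 3 have k: "k = 2*m + s" and "m \<ge> 1" by auto
      then have "binom_weight m m * \<psi> $ k = 0"
        using weighted weighted_coeffs_leading[of m s \<psi>] lower by simp
      then show ?thesis
        using binom_weight_self_nonzero[OF \<open>m \<ge> 1\<close>, where 'a='a] by simp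
    qed (simp add: low)
  qed
qed

lemma twist_fixed_iff_weighted_coeffs_eq_0:
  fixes \<phi> :: "'a::field_char_0 fps"
  assumes "odd s" and low: "\<And>n. n \<le> s \<Longrightarrow> \<phi> $ n = 0"
  shows "twist s \<phi> = \<phi> \<longleftrightarrow> (\<forall>m\<ge>1. weighted_coeffs s m \<phi> = 0)"
proof
  assume fixed: "twist s \<phi> = \<phi>"
  show "\<forall>m\<ge>1. weighted_coeffs s m \<phi> = 0"
  proof (intro allI impI)
    fix m :: nat assume "m \<ge> 1"
    then have "weighted_coeffs s m \<phi> = - weighted_coeffs s m \<phi>"
      using weighted_coeffs_twist[OF \<open>odd s\<close> _ low] by (simp add: fixed)
    then show "weighted_coeffs s m \<phi> = 0" by simp
  qed
next
  assume weighted: "\<forall>m\<ge>1. weighted_coeffs s m \<phi> = 0"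
  have "\<phi> - twist s \<phi> = 0"
  proof (rule twist_antifixed_eq_0[OF \<open>odd s\<close>])
    show "twist s (\<phi> - twist s \<phi>) = - (\<phi> - twist s \<phi>)"
      by (simp add: twist_diff twist_twist)
    show "(\<phi> - twist s \<phi>) $ n = 0" if "n \<le> s" for n
      using that low twist_nth_triangular[of n \<phi> s] by simp
    show "weighted_coeffs s m (\<phi> - twist s \<phi>) = 0" if "m \<ge> 1" for m
      using that weighted weighted_coeffs_twist[OF \<open>odd s\<close> that low] by (simp add: weighted_coeffs_diff)
  qed
  then show "twist s \<phi> = \<phi>" by simp
qed

theorem corollary4p8:
  fixes \<phi> :: "'a::field_char_0 fps" and r :: int
  assumes "odd r" and "r < 0"
    and "\<And>i::nat. int i \<le> - r \<Longrightarrow> fps_nth \<phi> i = 0"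
  shows "\<phi> \<in> F_space r \<longleftrightarrow>
    (\<forall>m::nat. m \<ge> 1 \<longrightarrow>
       (\<Sum>i=0..m. (-1)^i * of_nat (m choose i) * (of_nat (m + i) / of_nat m)
                   * fps_nth \<phi> (nat (int m - r + int i))) = (0::'a))"
proof -
  define s where "s = nat (- r)"
  have r: "r = - int s" using \<open>r < 0\<close> by (simp add: s_def)
  have "odd s" using \<open>odd r\<close> by (simp add: r)
  have low: "\<phi> $ n = 0" if "n \<le> s" for n
    using assms(3)[of n] that by (simp add: r)
  have coeff_sum: "(\<Sum>i=0..m. (-1)^i * of_nat (m choose i) * (of_nat (m + i) / of_nat m)
                   * fps_nth \<phi> (nat (int m - r + int i))) = weighted_coeffs s m \<phi>" for m
    by (simp add: weighted_coeffs_def binom_weight_def r nat_add_distrib add_ac)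
  have "\<phi> \<in> F_space r \<longleftrightarrow> twist s \<phi> = \<phi>"
    unfolding s_def by (rule F_space_iff_twist_fixed[OF \<open>r < 0\<close>])
  also have "\<dots> \<longleftrightarrow> (\<forall>m\<ge>1. weighted_coeffs s m \<phi> = 0)"
    by (rule twist_fixed_iff_weighted_coeffs_eq_0[OF \<open>odd s\<close> low])
  finally show ?thesis by (simp only: coeff_sum)
qed
end
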